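(* Given $A_7,A_8\in\mathbb R$, there exist $\gamma_2,\gamma_3\in C^\infty([-1,1])$ such that \[ \gamma_2(t)=\begin{cases}-\frac12A_7^2t & t\ge\frac34\\ -\frac12A_8^2t & t\le-\frac34\end{cases},\qquad \gamma_3(t)=\begin{cases}A_7t & t\ge\frac34\\ A_8t & t\le-\frac34\end{cases}, \] and $2\gamma_2'+(\gamma_3')^2=0$ on $[-1,1]$. *)

theory Defs
  imports "HOL-Analysis.Analysis"
begin

text \<open>C-infinity on a set S (for S a closed interval, derivatives at the endpoints are
one-sided): there is a sequence of successive derivatives, each taken within S.\<close>
definition C_infinity_on :: "real set \<Rightarrow> (real \<Rightarrow> real) \<Rightarrow> bool" where
  "C_infinity_on S f \<longleftrightarrow>
     (\<exists>D :: nat \<Rightarrow> real \<Rightarrow> real. D 0 = f \<and>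
        (\<forall>n. \<forall>x\<in>S. (D n has_real_derivative D (Suc n) x) (at x within S)))"

end

theory Submission
  imports Defs "HOL-Computational_Algebra.Polynomial"
begin

text \<open>It suffices to find a smooth \<open>g\<close> with \<open>g = A\<^sub>7\<close> for \<open>t \<ge> 3/4\<close>, \<open>g = A\<^sub>8\<close> for
\<open>t \<le> -3/4\<close>, and \<open>\<integral>g = 3/4 (A\<^sub>7 + A\<^sub>8)\<close>, \<open>\<integral>g\<^sup>2 = 3/4 (A\<^sub>7\<^sup>2 + A\<^sub>8\<^sup>2)\<close> over \<open>[-3/4, 3/4]\<close>:
then \<open>\<gamma>\<^sub>3 = \<integral>g\<close> and \<open>\<gamma>\<^sub>2 = -\<integral>g\<^sup>2/2\<close>, normalised at \<open>3/4\<close>, are linear with the required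
slopes outside \<open>[-3/4, 3/4]\<close>, and \<open>2\<gamma>\<^sub>2' + \<gamma>\<^sub>3'\<^sup>2 = -g\<^sup>2 + g\<^sup>2 = 0\<close>. Such a \<open>g\<close> is
\<open>(A\<^sub>7 + A\<^sub>8)/2 + (A\<^sub>7 - A\<^sub>8)/2 \<cdot> s\<close> for a smooth odd transition \<open>s\<close> from \<open>-1\<close> to \<open>1\<close> with
\<open>\<integral>s\<^sup>2 = 3/2\<close>; oddness gives \<open>\<integral>s = 0\<close>, and \<open>\<integral>s\<^sup>2\<close> is tuned by adding to an odd smooth step
a multiple of an odd bump supported where the step vanishes.\<close>

definition smooth :: "(real \<Rightarrow> real) \<Rightarrow> bool" where
  "smooth f \<longleftrightarrow> (\<exists>D. D 0 = f \<and> (\<forall>n x. (D n has_real_derivative D (Suc n) x) (at x)))"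

lemma smooth_coinduct:
  assumes "X f"
    and step: "\<And>h. X h \<Longrightarrow> \<exists>h'. (\<forall>x. (h has_real_derivative h' x) (at x)) \<and> X h'"
  shows "smooth f"
proof -
  obtain S where S: "\<And>h. X h \<Longrightarrow> (\<forall>x. (h has_real_derivative S h x) (at x)) \<and> X (S h)"
    using step by metis
  define D where "D n = (S ^^ n) f" for n
  have X: "X (D n)" for n
    by (induction n) (auto simp: D_def assms(1) S)
  have "(D n has_real_derivative D (Suc n) x) (at x)" for n x
    using S[OF X[of n]] by (simp add: D_def)
  then show ?thesis
    unfolding smooth_def by (intro exI[of _ D]) (auto simp: D_def)
qed

lemma smooth_derivative:
  assumes "smooth f"
  obtains f' where "\<And>x. (f has_real_derivative f' x) (at x)" "smooth f'"
proof -
  from assms obtain D where D: "D 0 = f" "\<And>n x. (D n has_real_derivative D (Suc n) x) (at x)"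
    unfolding smooth_def by blast
  have "smooth (D 1)"
    unfolding smooth_def by (rule exI[of _ "\<lambda>n. D (Suc n)"]) (use D in auto)
  with D that show ?thesis by fastforce
qed

lemma smooth_imp_continuous_on: "smooth f \<Longrightarrow> continuous_on S f"
  by (meson DERIV_isCont continuous_at_imp_continuous_on smooth_derivative)

lemma smooth_imp_integrable_on: "smooth f \<Longrightarrow> f integrable_on {a..b}"
  by (rule integrable_continuous_real[OF smooth_imp_continuous_on])

lemma smooth_const: "smooth (\<lambda>x. c)"
  by (rule smooth_coinduct[where X = "\<lambda>h. \<exists>c. h = (\<lambda>x. c)"]) (auto intro!: exI[of _ "\<lambda>x. 0"])

lemma smooth_add:
  assumes "smooth a" "smooth b"
  shows "smooth (\<lambda>x. a x + b x)"
proof (rule smooth_coinduct[where X = "\<lambda>h. \<exists>a b. smooth a \<and> smooth b \<and> h = (\<lambda>x. a x + b x)"])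
  fix h assume "\<exists>a b. smooth a \<and> smooth b \<and> h = (\<lambda>x. a x + b x)"
  then obtain a b where h: "smooth a" "smooth b" "h = (\<lambda>x. a x + b x)" by blast
  obtain a' where "\<And>x. (a has_real_derivative a' x) (at x)" "smooth a'"
    using smooth_derivative[OF h(1)] by blast
  moreover obtain b' where "\<And>x. (b has_real_derivative b' x) (at x)" "smooth b'"
    using smooth_derivative[OF h(2)] by blast
  ultimately show "\<exists>h'. (\<forall>x. (h has_real_derivative h' x) (at x)) \<and>
      (\<exists>a b. smooth a \<and> smooth b \<and> h' = (\<lambda>x. a x + b x))"
    using h(3) by (intro exI[of _ "\<lambda>x. a' x + b' x"]) (auto intro!: DERIV_add)
qed (use assms in auto)

text \<open>Products are handled through finite sums of products of smooth functions, a class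
that the Leibniz rule maps into itself.\<close>

lemma sum_products_has_derivative:
  assumes "\<forall>(a, b) \<in> set ps. smooth a \<and> smooth b"
  shows "\<exists>ps'. (\<forall>(a, b) \<in> set ps'. smooth a \<and> smooth b) \<and>
     (\<forall>x. ((\<lambda>x. \<Sum>(a, b)\<leftarrow>ps. a x * b x) has_real_derivative (\<Sum>(a, b)\<leftarrow>ps'. a x * b x)) (at x))"
  using assms
proof (induction ps)
  case Nil
  then show ?case by (intro exI[of _ "[]"]) auto
next
  case (Cons ab ps)
  obtain a b where ab: "ab = (a, b)" by fastforce
  with Cons obtain ps' where ps': "\<forall>(a, b) \<in> set ps'. smooth a \<and> smooth b"
    "\<And>x. ((\<lambda>x. \<Sum>(a, b)\<leftarrow>ps. a x * b x) has_real_derivative (\<Sum>(a, b)\<leftarrow>ps'. a x * b x)) (at x)"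
    by auto
  have a: "smooth a" and b: "smooth b" using Cons.prems ab by auto
  obtain a' where a': "\<And>x. (a has_real_derivative a' x) (at x)" "smooth a'"
    using smooth_derivative[OF a] by blast
  obtain b' where b': "\<And>x. (b has_real_derivative b' x) (at x)" "smooth b'"
    using smooth_derivative[OF b] by blast
  have "((\<lambda>x. a x * b x + (\<Sum>(a, b)\<leftarrow>ps. a x * b x)) has_real_derivative
      a' x * b x + a x * b' x + (\<Sum>(a, b)\<leftarrow>ps'. a x * b x)) (at x)" for x
    using DERIV_add[OF DERIV_mult[OF a'(1) b'(1)] ps'(2)] by (simp add: algebra_simps)
  then show ?case
    using ps'(1) a' b' a b ab by (intro exI[of _ "(a', b) # (a, b') # ps'"]) (simp add: add.assoc)
qed

lemma smooth_mult:
  assumes "smooth a" "smooth b"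
  shows "smooth (\<lambda>x. a x * b x)"
proof (rule smooth_coinduct[where X = "\<lambda>h. \<exists>ps. (\<forall>(a, b) \<in> set ps. smooth a \<and> smooth b) \<and>
                                             h = (\<lambda>x. \<Sum>(a, b)\<leftarrow>ps. a x * b x)"])
  show "\<exists>ps. (\<forall>(a, b) \<in> set ps. smooth a \<and> smooth b) \<and> (\<lambda>x. a x * b x) = (\<lambda>x. \<Sum>(a, b)\<leftarrow>ps. a x * b x)"
    using assms by (intro exI[of _ "[(a, b)]"]) auto
next
  fix h assume "\<exists>ps. (\<forall>(a, b) \<in> set ps. smooth a \<and> smooth b) \<and> h = (\<lambda>x. \<Sum>(a, b)\<leftarrow>ps. a x * b x)"
  then obtain ps where ps: "\<forall>(a, b) \<in> set ps. smooth a \<and> smooth b"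
    and h: "h = (\<lambda>x. \<Sum>(a, b)\<leftarrow>ps. a x * b x)"
    by blast
  obtain ps' where "\<forall>(a, b) \<in> set ps'. smooth a \<and> smooth b"
    "\<forall>x. ((\<lambda>x. \<Sum>(a, b)\<leftarrow>ps. a x * b x) has_real_derivative (\<Sum>(a, b)\<leftarrow>ps'. a x * b x)) (at x)"
    using sum_products_has_derivative[OF ps] by blast
  with h show "\<exists>h'. (\<forall>x. (h has_real_derivative h' x) (at x)) \<and> (\<exists>ps. (\<forall>(a, b) \<in> set ps. smooth a \<and> smooth b) \<and>
      h' = (\<lambda>x. \<Sum>(a, b)\<leftarrow>ps. a x * b x))"
    by (intro exI[of _ "\<lambda>x. \<Sum>(a, b)\<leftarrow>ps'. a x * b x"]) auto
qed

lemma smooth_cmult: "smooth a \<Longrightarrow> smooth (\<lambda>x. c * a x)"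
  using smooth_mult[OF smooth_const] .

lemma smooth_diff: "smooth a \<Longrightarrow> smooth b \<Longrightarrow> smooth (\<lambda>x. a x - b x)"
  using smooth_add[OF _ smooth_cmult[of b "-1"]] by simp

lemma smooth_compose_affine:
  assumes "smooth a"
  shows "smooth (\<lambda>x. a (c * x + e))"
proof (rule smooth_coinduct[where X = "\<lambda>h. \<exists>a k. smooth a \<and> h = (\<lambda>x. k * a (c * x + e))"])
  show "\<exists>a' k. smooth a' \<and> (\<lambda>x. a (c * x + e)) = (\<lambda>x. k * a' (c * x + e))"
    using assms by (intro exI[of _ a] exI[of _ 1]) auto
next
  fix h assume "\<exists>a k. smooth a \<and> h = (\<lambda>x. k * a (c * x + e))"
  then obtain a k where h: "smooth a" "h = (\<lambda>x. k * a (c * x + e))" by blast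
  obtain a' where a': "\<And>x. (a has_real_derivative a' x) (at x)" "smooth a'"
    using smooth_derivative[OF h(1)] by blast
  have "((\<lambda>x. k * a (c * x + e)) has_real_derivative (k * c) * a' (c * x + e)) (at x)" for x
  proof -
    have "((\<lambda>x. a (c * x + e)) has_real_derivative a' (c * x + e) * c) (at x)"
      by (rule DERIV_chain2[OF a'(1)]) (auto intro!: derivative_eq_intros)
    from DERIV_cmult[OF this, of k] show ?thesis by (simp add: algebra_simps)
  qed
  with h(2) a'(2) show "\<exists>h'. (\<forall>x. (h has_real_derivative h' x) (at x)) \<and>
      (\<exists>a k. smooth a \<and> h' = (\<lambda>x. k * a (c * x + e)))"
    by (intro exI[of _ "\<lambda>x. (k * c) * a' (c * x + e)"] conjI exI[of _ a'] exI[of _ "k * c"]) auto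
qed

text \<open>Likewise, the derivative of \<open>a \<cdot> H\<^sup>-\<^sup>k\<close> is \<open>a' \<cdot> H\<^sup>-\<^sup>k - k a H' \<cdot> H\<^sup>-\<^sup>k\<^sup>-\<^sup>1\<close>, so finite sums of
such terms with smooth coefficients \<open>a\<close> are closed under differentiation.\<close>

lemma sum_inverse_powers_has_derivative:
  assumes H: "\<And>x. (H has_real_derivative H' x) (at x)" "smooth H'" "\<And>x. H x > 0"
    and ps: "\<forall>(a, k) \<in> set ps. smooth a"
  shows "\<exists>ps'. (\<forall>(a, k) \<in> set ps'. smooth a) \<and>
     (\<forall>x. ((\<lambda>x. \<Sum>(a, k)\<leftarrow>ps. a x * (1 / H x) ^ k) has_real_derivative
            (\<Sum>(a, k)\<leftarrow>ps'. a x * (1 / H x) ^ k)) (at x))"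
  using ps
proof (induction ps)
  case Nil
  then show ?case by (intro exI[of _ "[]"]) auto
next
  case (Cons ak ps)
  obtain a k where ak: "ak = (a, k)" by fastforce
  with Cons obtain ps' where ps': "\<forall>(a, k) \<in> set ps'. smooth a"
    "\<And>x. ((\<lambda>x. \<Sum>(a, k)\<leftarrow>ps. a x * (1 / H x) ^ k) has_real_derivative
            (\<Sum>(a, k)\<leftarrow>ps'. a x * (1 / H x) ^ k)) (at x)"
    by auto
  have a: "smooth a" using Cons.prems ak by auto
  obtain a' where a': "\<And>x. (a has_real_derivative a' x) (at x)" "smooth a'"
    using smooth_derivative[OF a] by blast
  define b where "b x = - real k * a x * H' x" for x
  have b: "smooth b" unfolding b_def by (intro smooth_mult smooth_cmult a H)
  have "((\<lambda>x. 1 / H x) has_real_derivative - H' x / (H x)\<^sup>2) (at x)" for x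
    using DERIV_divide[OF DERIV_const[of 1] H(1)[of x]] H(3)[of x] by (simp add: power2_eq_square)
  then have "((\<lambda>x. a x * (1 / H x) ^ k) has_real_derivative
      a' x * (1 / H x) ^ k + (real k * (- H' x / (H x)\<^sup>2 * (1 / H x) ^ (k - Suc 0))) * a x) (at x)" for x
    by (rule DERIV_mult[OF a'(1) DERIV_power])
  moreover have "a' x * (1 / H x) ^ k + (real k * (- H' x / (H x)\<^sup>2 * (1 / H x) ^ (k - Suc 0))) * a x
      = a' x * (1 / H x) ^ k + b x * (1 / H x) ^ Suc k" for x
  proof (cases k)
    case 0
    then show ?thesis by (simp add: b_def)
  next
    case (Suc j)
    have "H x \<noteq> 0" using H(3)[of x] by simp
    with Suc show ?thesis by (simp add: b_def field_simps power2_eq_square)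
  qed
  ultimately have "((\<lambda>x. a x * (1 / H x) ^ k) has_real_derivative
      a' x * (1 / H x) ^ k + b x * (1 / H x) ^ Suc k) (at x)" for x
    by metis
  from DERIV_add[OF this ps'(2)] have "((\<lambda>x. a x * (1 / H x) ^ k + (\<Sum>(a, k)\<leftarrow>ps. a x * (1 / H x) ^ k))
      has_real_derivative a' x * (1 / H x) ^ k + b x * (1 / H x) ^ Suc k
        + (\<Sum>(a, k)\<leftarrow>ps'. a x * (1 / H x) ^ k)) (at x)" for x .
  then show ?case
    using ps'(1) a' a b ak by (intro exI[of _ "(a', k) # (b, Suc k) # ps'"]) (simp add: add.assoc)
qed

lemma smooth_inverse:
  assumes "smooth H" "\<And>x. H x > 0"
  shows "smooth (\<lambda>x. 1 / H x)"
proof -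
  obtain H' where H': "\<And>x. (H has_real_derivative H' x) (at x)" "smooth H'"
    using smooth_derivative[OF assms(1)] by blast
  show ?thesis
  proof (rule smooth_coinduct[where X = "\<lambda>h. \<exists>ps. (\<forall>(a, k) \<in> set ps. smooth a) \<and>
                                               h = (\<lambda>x. \<Sum>(a, k)\<leftarrow>ps. a x * (1 / H x) ^ k)"])
    show "\<exists>ps. (\<forall>(a, k) \<in> set ps. smooth a) \<and> (\<lambda>x. 1 / H x) = (\<lambda>x. \<Sum>(a, k)\<leftarrow>ps. a x * (1 / H x) ^ k)"
      by (intro exI[of _ "[(\<lambda>x. 1, 1)]"]) (auto intro: smooth_const)
  next
    fix h assume "\<exists>ps. (\<forall>(a, k) \<in> set ps. smooth a) \<and> h = (\<lambda>x. \<Sum>(a, k)\<leftarrow>ps. a x * (1 / H x) ^ k)"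
    then obtain ps where ps: "\<forall>(a, k) \<in> set ps. smooth a"
      and h: "h = (\<lambda>x. \<Sum>(a, k)\<leftarrow>ps. a x * (1 / H x) ^ k)"
      by blast
    obtain ps' where "\<forall>(a, k) \<in> set ps'. smooth a"
      "\<forall>x. ((\<lambda>x. \<Sum>(a, k)\<leftarrow>ps. a x * (1 / H x) ^ k) has_real_derivative
             (\<Sum>(a, k)\<leftarrow>ps'. a x * (1 / H x) ^ k)) (at x)"
      using sum_inverse_powers_has_derivative[OF H' assms(2) ps] by blast
    with h show "\<exists>h'. (\<forall>x. (h has_real_derivative h' x) (at x)) \<and> (\<exists>ps. (\<forall>(a, k) \<in> set ps. smooth a) \<and>
        h' = (\<lambda>x. \<Sum>(a, k)\<leftarrow>ps. a x * (1 / H x) ^ k))"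
      by (intro exI[of _ "\<lambda>x. \<Sum>(a, k)\<leftarrow>ps'. a x * (1 / H x) ^ k"]) auto
  qed
qed

lemma smooth_divide: "smooth a \<Longrightarrow> smooth H \<Longrightarrow> (\<And>x. H x > 0) \<Longrightarrow> smooth (\<lambda>x. a x / H x)"
  using smooth_mult[OF _ smooth_inverse, of a H] by simp

definition exp_recip_poly :: "real poly \<Rightarrow> real \<Rightarrow> real" where
  "exp_recip_poly p x = (if 0 < x then poly p (1 / x) * exp (- 1 / x) else 0)"

lemma exp_recip_poly_has_derivative_0: "(exp_recip_poly p has_real_derivative 0) (at 0)"
  unfolding has_field_derivative_iff
proof (rule filterlim_split_at)
  have "eventually (\<lambda>y. (exp_recip_poly p y - exp_recip_poly p 0) / (y - 0) = 0) (at_left 0)"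
    unfolding eventually_at_left_field by (rule exI[of _ "-1"]) (auto simp: exp_recip_poly_def)
  then show "((\<lambda>y. (exp_recip_poly p y - exp_recip_poly p 0) / (y - 0)) \<longlongrightarrow> 0) (at_left 0)"
    by (rule tendsto_eventually)
next
  txt \<open>At \<open>y = 1/x\<close> the difference quotient is \<open>x p(x) e\<^sup>-\<^sup>x\<close>, which tends to \<open>0\<close>.\<close>
  have "((\<lambda>x. \<Sum>i\<le>degree (pCons 0 p). coeff (pCons 0 p) i * (x ^ i / exp x)) \<longlongrightarrow> 0) at_top"
    by (intro tendsto_null_sum tendsto_mult_right_zero tendsto_power_div_exp_0)
  moreover have "eventually (\<lambda>x. (\<Sum>i\<le>degree (pCons 0 p). coeff (pCons 0 p) i * (x ^ i / exp x))
      = (exp_recip_poly p (inverse x) - exp_recip_poly p 0) / (inverse x - 0)) at_top"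
    using eventually_gt_at_top[of "0::real"]
  proof eventually_elim
    case (elim x)
    have "(\<Sum>i\<le>degree (pCons 0 p). coeff (pCons 0 p) i * (x ^ i / exp x)) = poly (pCons 0 p) x * exp (- x)"
      by (simp add: poly_altdef exp_minus divide_inverse sum_distrib_right mult.assoc)
    with elim show ?case
      by (simp add: exp_recip_poly_def field_simps)
  qed
  ultimately have "((\<lambda>x. (exp_recip_poly p (inverse x) - exp_recip_poly p 0) / (inverse x - 0)) \<longlongrightarrow> 0) at_top"
    by (rule Lim_transform_eventually)
  then show "((\<lambda>y. (exp_recip_poly p y - exp_recip_poly p 0) / (y - 0)) \<longlongrightarrow> 0) (at_right 0)"
    unfolding filterlim_at_right_to_top .
qed

lemma exp_recip_poly_has_derivative_pos:
  assumes x: "x > 0"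
  shows "(exp_recip_poly p has_real_derivative exp_recip_poly (monom 1 2 * (p - pderiv p)) x) (at x)"
proof -
  have recip: "((\<lambda>y. 1 / y) has_real_derivative - (1 / x)\<^sup>2) (at x)"
    using DERIV_inverse[of x UNIV] x by (simp add: inverse_eq_divide power2_eq_square)
  have "((\<lambda>y. poly p (1 / y)) has_real_derivative poly (pderiv p) (1 / x) * - (1 / x)\<^sup>2) (at x)"
    by (rule DERIV_chain2[OF poly_DERIV recip])
  moreover have "((\<lambda>y. exp (- 1 / y)) has_real_derivative exp (- 1 / x) * (1 / x)\<^sup>2) (at x)"
    using DERIV_chain2[OF DERIV_exp DERIV_minus[OF recip]] by simp
  ultimately have "((\<lambda>y. poly p (1 / y) * exp (- 1 / y)) has_real_derivative
      (1 / x)\<^sup>2 * (poly p (1 / x) - poly (pderiv p) (1 / x)) * exp (- 1 / x)) (at x)"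
    by (rule DERIV_mult[THEN DERIV_cong]) (simp add: algebra_simps)
  then have "(exp_recip_poly p has_real_derivative
      (1 / x)\<^sup>2 * (poly p (1 / x) - poly (pderiv p) (1 / x)) * exp (- 1 / x)) (at x)"
    by (rule has_field_derivative_transform_within_open[of _ _ _ "{0<..}"])
       (use x in \<open>auto simp: exp_recip_poly_def\<close>)
  moreover have "exp_recip_poly (monom 1 2 * (p - pderiv p)) x
      = (1 / x)\<^sup>2 * (poly p (1 / x) - poly (pderiv p) (1 / x)) * exp (- 1 / x)"
    using x by (simp add: exp_recip_poly_def poly_monom)
  ultimately show ?thesis by simp
qed

lemma exp_recip_poly_has_derivative:
  "(exp_recip_poly p has_real_derivative exp_recip_poly (monom 1 2 * (p - pderiv p)) x) (at x)"
proof (cases x "0::real" rule: linorder_cases)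
  case less
  have "(exp_recip_poly p has_real_derivative 0) (at x)"
    by (rule has_field_derivative_transform_within_open[OF DERIV_const[of 0], of "{..<0}"])
       (use less in \<open>auto simp: exp_recip_poly_def\<close>)
  moreover have "exp_recip_poly (monom 1 2 * (p - pderiv p)) x = 0"
    using less by (simp add: exp_recip_poly_def)
  ultimately show ?thesis by simp
next
  case equal
  then show ?thesis using exp_recip_poly_has_derivative_0 by (simp add: exp_recip_poly_def)
qed (rule exp_recip_poly_has_derivative_pos)

lemma smooth_exp_recip_poly: "smooth (exp_recip_poly p)"
proof (rule smooth_coinduct[where X = "\<lambda>h. \<exists>p. h = exp_recip_poly p"])
  fix h assume "\<exists>p. h = exp_recip_poly p"
  then obtain q where "h = exp_recip_poly q" by blast
  then show "\<exists>h'. (\<forall>x. (h has_real_derivative h' x) (at x)) \<and> (\<exists>p. h' = exp_recip_poly p)"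
    by (intro exI[of _ "exp_recip_poly (monom 1 2 * (q - pderiv q))"]) (auto intro: exp_recip_poly_has_derivative)
qed auto

definition flat_exp :: "real \<Rightarrow> real" where
  "flat_exp = exp_recip_poly 1"

lemma smooth_flat_exp: "smooth flat_exp"
  unfolding flat_exp_def by (rule smooth_exp_recip_poly)

lemma flat_exp_eq_0: "x \<le> 0 \<Longrightarrow> flat_exp x = 0"
  by (simp add: flat_exp_def exp_recip_poly_def)

lemma flat_exp_pos: "x > 0 \<Longrightarrow> flat_exp x > 0"
  by (simp add: flat_exp_def exp_recip_poly_def)

lemma flat_exp_nonneg: "flat_exp x \<ge> 0"
  by (simp add: flat_exp_def exp_recip_poly_def)

definition smooth_step :: "real \<Rightarrow> real \<Rightarrow> real \<Rightarrow> real" where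
  "smooth_step a b t = flat_exp (t - a) / (flat_exp (t - a) + flat_exp (b - t))"

definition bump :: "real \<Rightarrow> real \<Rightarrow> real \<Rightarrow> real" where
  "bump a b t = flat_exp (t - a) * flat_exp (b - t)"

lemma smooth_step_denominator_pos: "a < b \<Longrightarrow> flat_exp (t - a) + flat_exp (b - t) > 0"
  using flat_exp_pos[of "t - a"] flat_exp_pos[of "b - t"] flat_exp_nonneg[of "t - a"] flat_exp_nonneg[of "b - t"]
  by (cases "t > a") auto

lemma smooth_smooth_step:
  assumes "a < b"
  shows "smooth (smooth_step a b)"
proof -
  have "smooth (\<lambda>t. flat_exp (1 * t + - a))" "smooth (\<lambda>t. flat_exp (- 1 * t + b))"
    by (intro smooth_compose_affine smooth_flat_exp)+
  then show ?thesis
    unfolding smooth_step_def[abs_def]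
    using smooth_divide smooth_add smooth_step_denominator_pos[OF assms] by simp
qed

lemma smooth_step_eq_0: "t \<le> a \<Longrightarrow> smooth_step a b t = 0"
  by (simp add: smooth_step_def flat_exp_eq_0)

lemma smooth_step_eq_1: "a < b \<Longrightarrow> b \<le> t \<Longrightarrow> smooth_step a b t = 1"
  using smooth_step_denominator_pos[of a b t] by (simp add: smooth_step_def flat_exp_eq_0)

lemma smooth_step_bounds: "a < b \<Longrightarrow> 0 \<le> smooth_step a b t \<and> smooth_step a b t \<le> 1"
  using smooth_step_denominator_pos[of a b t] flat_exp_nonneg[of "t - a"] flat_exp_nonneg[of "b - t"]
  by (simp add: smooth_step_def)

lemma smooth_bump: "smooth (bump a b)"
proof -
  have "smooth (\<lambda>t. flat_exp (1 * t + - a))" "smooth (\<lambda>t. flat_exp (- 1 * t + b))"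
    by (intro smooth_compose_affine smooth_flat_exp)+
  then show ?thesis
    unfolding bump_def[abs_def] using smooth_mult by simp
qed

lemma bump_eq_0: "t \<le> a \<or> b \<le> t \<Longrightarrow> bump a b t = 0"
  by (auto simp: bump_def flat_exp_eq_0)

lemma bump_pos: "a < t \<Longrightarrow> t < b \<Longrightarrow> bump a b t > 0"
  by (simp add: bump_def flat_exp_pos)

lemma smooth_diff_reflect: "smooth f \<Longrightarrow> smooth (\<lambda>t. f t - f (- t))"
  using smooth_diff[OF _ smooth_compose_affine[of f "-1" 0]] by simp

lemma has_integral_diff_reflect_0:
  fixes f :: "real \<Rightarrow> real"
  assumes "f integrable_on {-a..a}"
  shows "((\<lambda>t. f t - f (- t)) has_integral 0) {-a..a}"
proof -
  have f: "(f has_integral integral {-a..a} f) {-a..a}"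
    using assms by (rule integrable_integral)
  moreover have "((\<lambda>t. f (- t)) has_integral integral {-a..a} f) {-a..a}"
    using f has_integral_reflect_real[where a = "-a" and b = a and f = f] by simp
  ultimately have "((\<lambda>t. f t - f (- t)) has_integral integral {-a..a} f - integral {-a..a} f) {-a..a}"
    by (rule has_integral_diff)
  then show ?thesis by simp
qed

lemma odd_step_exists:
  fixes c :: real
  assumes "c > 0"
  obtains \<sigma> where "smooth \<sigma>" "\<And>t. \<bar>t\<bar> \<le> c / 2 \<Longrightarrow> \<sigma> t = 0"
    "\<And>t. c \<le> t \<Longrightarrow> \<sigma> t = 1" "\<And>t. t \<le> - c \<Longrightarrow> \<sigma> t = - 1"
    "\<And>t. \<bar>\<sigma> t\<bar> \<le> 1" "(\<sigma> has_integral 0) {-c..c}"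
proof
  let ?\<sigma> = "\<lambda>t. smooth_step (c / 2) c t - smooth_step (c / 2) c (- t)"
  have c: "c / 2 < c" using assms by simp
  show "smooth ?\<sigma>"
    by (intro smooth_diff_reflect smooth_smooth_step c)
  show "(?\<sigma> has_integral 0) {-c..c}"
    by (intro has_integral_diff_reflect_0 smooth_imp_integrable_on smooth_smooth_step c)
  show "?\<sigma> t = 0" if "\<bar>t\<bar> \<le> c / 2" for t
    using that by (simp add: smooth_step_eq_0)
  show "?\<sigma> t = 1" if "c \<le> t" for t
    using that assms by (simp add: smooth_step_eq_0 smooth_step_eq_1)
  show "?\<sigma> t = - 1" if "t \<le> - c" for t
    using that assms by (simp add: smooth_step_eq_0 smooth_step_eq_1)
  show "\<bar>?\<sigma> t\<bar> \<le> 1" for t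
    using smooth_step_bounds[OF c, of t] smooth_step_bounds[OF c, of "- t"] by linarith
qed

lemma odd_bump_exists:
  fixes c :: real
  assumes "c > 0"
  obtains \<beta> where "smooth \<beta>" "\<And>t. c / 2 \<le> \<bar>t\<bar> \<Longrightarrow> \<beta> t = 0"
    "(\<beta> has_integral 0) {-c..c}" "\<beta> (c / 4) \<noteq> 0"
proof
  let ?\<beta> = "\<lambda>t. bump 0 (c / 2) t - bump 0 (c / 2) (- t)"
  show "smooth ?\<beta>"
    by (intro smooth_diff_reflect smooth_bump)
  show "(?\<beta> has_integral 0) {-c..c}"
    by (intro has_integral_diff_reflect_0 smooth_imp_integrable_on smooth_bump)
  show "?\<beta> t = 0" if "c / 2 \<le> \<bar>t\<bar>" for t
  proof -
    have "bump 0 (c / 2) t = 0" "bump 0 (c / 2) (- t) = 0"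
      using that assms by (auto intro!: bump_eq_0)
    then show ?thesis by simp
  qed
  show "?\<beta> (c / 4) \<noteq> 0"
    using assms bump_pos[of 0 "c / 4" "c / 2"] by (simp add: bump_eq_0)
qed

text \<open>The odd step \<open>\<sigma>\<close> and the odd bump \<open>\<beta>\<close> have disjoint supports, so
\<open>\<integral>(\<sigma> + \<kappa>\<beta>)\<^sup>2 = \<integral>\<sigma>\<^sup>2 + \<kappa>\<^sup>2\<integral>\<beta>\<^sup>2\<close>; since \<open>\<integral>\<sigma>\<^sup>2 \<le> 2c\<close>, a suitable \<open>\<kappa>\<close> makes this exactly \<open>2c\<close>.\<close>

lemma odd_transition_exists:
  fixes c :: real
  assumes c: "c > 0"
  obtains s where "smooth s" "\<And>t. c \<le> t \<Longrightarrow> s t = 1" "\<And>t. t \<le> - c \<Longrightarrow> s t = - 1"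
    "(s has_integral 0) {-c..c}" "((\<lambda>t. (s t)\<^sup>2) has_integral 2 * c) {-c..c}"
proof -
  obtain \<sigma> where \<sigma>: "smooth \<sigma>" "\<And>t. \<bar>t\<bar> \<le> c / 2 \<Longrightarrow> \<sigma> t = 0"
    "\<And>t. c \<le> t \<Longrightarrow> \<sigma> t = 1" "\<And>t. t \<le> - c \<Longrightarrow> \<sigma> t = - 1"
    "\<And>t. \<bar>\<sigma> t\<bar> \<le> 1" "(\<sigma> has_integral 0) {-c..c}"
    using odd_step_exists[OF c] by blast
  obtain \<beta> where \<beta>: "smooth \<beta>" "\<And>t. c / 2 \<le> \<bar>t\<bar> \<Longrightarrow> \<beta> t = 0"
    "(\<beta> has_integral 0) {-c..c}" "\<beta> (c / 4) \<noteq> 0"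
    using odd_bump_exists[OF c] by blast
  define A where "A = integral {-c..c} (\<lambda>t. (\<sigma> t)\<^sup>2)"
  define B where "B = integral {-c..c} (\<lambda>t. (\<beta> t)\<^sup>2)"
  have A: "((\<lambda>t. (\<sigma> t)\<^sup>2) has_integral A) {-c..c}"
    unfolding A_def power2_eq_square by (intro integrable_integral smooth_imp_integrable_on smooth_mult \<sigma>(1))
  have B: "((\<lambda>t. (\<beta> t)\<^sup>2) has_integral B) {-c..c}"
    unfolding B_def power2_eq_square by (intro integrable_integral smooth_imp_integrable_on smooth_mult \<beta>(1))
  have "A \<le> 2 * c"
  proof -
    have "((\<lambda>t. 1) has_integral 2 * c) {-c..c}"
      using has_integral_const_real[of "1::real" "-c" c] c by simp
    with A show ?thesis
      by (rule has_integral_le) (use \<sigma>(5) in \<open>simp add: abs_square_le_1\<close>)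
  qed
  have "B > 0"
  proof -
    have "B \<ge> 0" by (rule has_integral_nonneg[OF B]) simp
    moreover have "B \<noteq> 0"
    proof
      assume "B = 0"
      with B have "(\<beta> (c / 4))\<^sup>2 = 0"
        using c smooth_imp_continuous_on[OF smooth_mult[OF \<beta>(1) \<beta>(1)]]
        by (intro has_integral_0_cbox_imp_0[of "-c" c "\<lambda>t. (\<beta> t)\<^sup>2"]) (auto simp: power2_eq_square)
      with \<beta>(4) show False by simp
    qed
    ultimately show ?thesis by simp
  qed
  define \<kappa> where "\<kappa> = sqrt ((2 * c - A) / B)"
  have \<kappa>: "\<kappa>\<^sup>2 = (2 * c - A) / B"
    unfolding \<kappa>_def using \<open>A \<le> 2 * c\<close> \<open>B > 0\<close> by simp
  have disjoint: "\<sigma> t * \<beta> t = 0" for t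
    using \<sigma>(2) \<beta>(2) by (cases "\<bar>t\<bar> \<le> c / 2") auto
  show thesis
  proof (rule that[of "\<lambda>t. \<sigma> t + \<kappa> * \<beta> t"])
    show "smooth (\<lambda>t. \<sigma> t + \<kappa> * \<beta> t)"
      by (intro smooth_add smooth_cmult \<sigma>(1) \<beta>(1))
    show "\<sigma> t + \<kappa> * \<beta> t = 1" if "c \<le> t" for t
      using that c \<sigma>(3) \<beta>(2) by simp
    show "\<sigma> t + \<kappa> * \<beta> t = - 1" if "t \<le> - c" for t
      using that c \<sigma>(4) \<beta>(2) by simp
    show "((\<lambda>t. \<sigma> t + \<kappa> * \<beta> t) has_integral 0) {-c..c}"
      using has_integral_add[OF \<sigma>(6) has_integral_mult_right[OF \<beta>(3)]] by simp
    have "(\<sigma> t + \<kappa> * \<beta> t)\<^sup>2 = (\<sigma> t)\<^sup>2 + \<kappa>\<^sup>2 * (\<beta> t)\<^sup>2" for t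
      using disjoint[of t] by (simp add: power2_eq_square algebra_simps)
    moreover have "A + \<kappa>\<^sup>2 * B = 2 * c"
      using \<open>B > 0\<close> by (simp add: \<kappa>)
    ultimately show "((\<lambda>t. (\<sigma> t + \<kappa> * \<beta> t)\<^sup>2) has_integral 2 * c) {-c..c}"
      using has_integral_add[OF A has_integral_mult_right[OF B, of "\<kappa>\<^sup>2"]] by simp
  qed
qed

lemma profile_with_moments_exists:
  fixes c p q :: real
  assumes c: "c > 0"
  obtains g where "smooth g" "\<And>t. c \<le> t \<Longrightarrow> g t = p" "\<And>t. t \<le> - c \<Longrightarrow> g t = q"
    "(g has_integral c * (p + q)) {-c..c}" "((\<lambda>t. (g t)\<^sup>2) has_integral c * (p\<^sup>2 + q\<^sup>2)) {-c..c}"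
proof -
  obtain s where s: "smooth s" "\<And>t. c \<le> t \<Longrightarrow> s t = 1" "\<And>t. t \<le> - c \<Longrightarrow> s t = - 1"
    "(s has_integral 0) {-c..c}" "((\<lambda>t. (s t)\<^sup>2) has_integral 2 * c) {-c..c}"
    using odd_transition_exists[OF c] by blast
  define m where "m = (p + q) / 2"
  define d where "d = (p - q) / 2"
  have const: "((\<lambda>t. k) has_integral 2 * c * k) {-c..c}" for k :: real
    using has_integral_const_real[of k "-c" c] c by simp
  show thesis
  proof (rule that[of "\<lambda>t. m + d * s t"])
    show "smooth (\<lambda>t. m + d * s t)"
      by (intro smooth_add smooth_const smooth_cmult s(1))
    show "m + d * s t = p" if "c \<le> t" for t
      using s(2)[OF that] by (simp add: m_def d_def field_simps)
    show "m + d * s t = q" if "t \<le> - c" for t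
      using s(3)[OF that] by (simp add: m_def d_def field_simps)
    show "((\<lambda>t. m + d * s t) has_integral c * (p + q)) {-c..c}"
      using has_integral_add[OF const[of m] has_integral_mult_right[OF s(4), of d]] by (simp add: m_def)
    have "(m + d * s t)\<^sup>2 = m\<^sup>2 + 2 * m * d * s t + d\<^sup>2 * (s t)\<^sup>2" for t
      by (simp add: power2_eq_square algebra_simps)
    moreover have "2 * c * m\<^sup>2 + 2 * m * d * 0 + d\<^sup>2 * (2 * c) = c * (p\<^sup>2 + q\<^sup>2)"
      by (simp add: m_def d_def power2_eq_square field_simps)
    ultimately show "((\<lambda>t. (m + d * s t)\<^sup>2) has_integral c * (p\<^sup>2 + q\<^sup>2)) {-c..c}"
      using has_integral_add[OF has_integral_add[OF const[of "m\<^sup>2"] has_integral_mult_right[OF s(4), of "2 * m * d"]]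
          has_integral_mult_right[OF s(5), of "d\<^sup>2"]] by simp
  qed
qed

lemma C_infinity_on_antiderivative:
  assumes "smooth h" "\<And>x. x \<in> S \<Longrightarrow> (G has_real_derivative h x) (at x within S)"
  shows "C_infinity_on S G"
proof -
  obtain D where D: "D 0 = h" "\<And>n x. (D n has_real_derivative D (Suc n) x) (at x)"
    using assms(1) unfolding smooth_def by blast
  define D' where "D' n = (case n of 0 \<Rightarrow> G | Suc k \<Rightarrow> D k)" for n
  have "(D' n has_real_derivative D' (Suc n) x) (at x within S)" if "x \<in> S" for n x
  proof (cases n)
    case 0
    then show ?thesis using assms(2) that D(1) by (simp add: D'_def)
  next
    case (Suc k)
    then show ?thesis using D(2) by (simp add: D'_def has_field_derivative_at_within)
  qed
  then show ?thesis
    unfolding C_infinity_on_def by (intro exI[of _ D']) (auto simp: D'_def)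
qed

lemma antiderivative_increment:
  assumes "\<And>x. x \<in> S \<Longrightarrow> (G has_real_derivative h x) (at x within S)"
    and "{a..b} \<subseteq> S" "a \<le> b" "(h has_integral i) {a..b}"
  shows "G b - G a = i"
proof -
  have "(h has_integral G b - G a) {a..b}"
  proof (rule fundamental_theorem_of_calculus[OF assms(3)])
    fix x assume "x \<in> {a..b}"
    with assms(1,2) have "(G has_vector_derivative h x) (at x within S)"
      by (auto simp: has_real_derivative_iff_has_vector_derivative)
    then show "(G has_vector_derivative h x) (at x within {a..b})"
      by (rule has_vector_derivative_within_subset) (use assms(2) in auto)
  qed
  then show ?thesis using assms(4) by (rule has_integral_unique)
qed

lemma has_integral_const_on:
  fixes h :: "real \<Rightarrow> real"
  assumes "a \<le> b" "\<And>x. x \<in> {a..b} \<Longrightarrow> h x = k"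
  shows "(h has_integral k * (b - a)) {a..b}"
  using has_integral_eq[OF _ has_integral_const_real[of k a b], of h] assms by (simp add: mult.commute)

lemma antiderivative_linear_outside:
  fixes c p q :: real
  assumes h: "smooth h" "\<And>t. c \<le> t \<Longrightarrow> h t = p" "\<And>t. t \<le> - c \<Longrightarrow> h t = q"
    "(h has_integral c * (p + q)) {-c..c}"
    and c: "0 < c" "c \<le> 1"
  obtains G where "C_infinity_on {-1..1} G"
    "\<And>t. t \<in> {-1..1} \<Longrightarrow> vector_derivative G (at t within {-1..1}) = h t"
    "\<And>t. t \<in> {-1..1} \<Longrightarrow> c \<le> t \<Longrightarrow> G t = p * t"
    "\<And>t. t \<in> {-1..1} \<Longrightarrow> t \<le> - c \<Longrightarrow> G t = q * t"
proof -
  obtain G0 where G0: "\<And>x. x \<in> {-1..1} \<Longrightarrow> (G0 has_real_derivative h x) (at x within {-1..1})"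
    using antiderivative_continuous[OF smooth_imp_continuous_on[OF h(1)]]
    by (metis has_real_derivative_iff_has_vector_derivative)
  define G where "G t = G0 t - G0 c + p * c" for t
  have G: "(G has_real_derivative h x) (at x within {-1..1})" if "x \<in> {-1..1}" for x
    unfolding G_def using G0[OF that] by (auto intro!: derivative_eq_intros)
  show thesis
  proof (rule that)
    show "C_infinity_on {-1..1} G"
      using C_infinity_on_antiderivative[OF h(1) G] .
    show "vector_derivative G (at t within {-1..1}) = h t" if "t \<in> {-1..1}" for t
      using vector_derivative_within_cbox[of "-1" 1 t G "h t"] G[OF that] that
      by (simp add: has_real_derivative_iff_has_vector_derivative)
    show "G t = p * t" if "t \<in> {-1..1}" "c \<le> t" for t
    proof -
      have "G t - G c = p * (t - c)"
        using that c h(2) by (intro antiderivative_increment[OF G] has_integral_const_on) auto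
      then show ?thesis by (simp add: G_def algebra_simps)
    qed
    show "G t = q * t" if "t \<in> {-1..1}" "t \<le> - c" for t
    proof -
      have "G c - G (- c) = c * (p + q)"
        using c by (intro antiderivative_increment[OF G _ _ h(4)]) auto
      moreover have "G (- c) - G t = q * (- c - t)"
        using that c h(3) by (intro antiderivative_increment[OF G] has_integral_const_on) auto
      ultimately show ?thesis by (simp add: G_def algebra_simps)
    qed
  qed
qed

theorem lemma4p3:
  fixes A7 A8 :: real
  shows "\<exists>\<gamma>2 \<gamma>3 :: real \<Rightarrow> real.
     C_infinity_on {-1..1} \<gamma>2 \<and> C_infinity_on {-1..1} \<gamma>3 \<and>
     (\<forall>t\<in>{-1..1}. t \<ge> 3/4 \<longrightarrow> \<gamma>2 t = - (1/2) * A7^2 * t \<and> \<gamma>3 t = A7 * t) \<and>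
     (\<forall>t\<in>{-1..1}. t \<le> -3/4 \<longrightarrow> \<gamma>2 t = - (1/2) * A8^2 * t \<and> \<gamma>3 t = A8 * t) \<and>
     (\<forall>t\<in>{-1..1}. 2 * vector_derivative \<gamma>2 (at t within {-1..1})
                      + (vector_derivative \<gamma>3 (at t within {-1..1}))^2 = 0)"
proof -
  obtain g where g: "smooth g" "\<And>t. 3/4 \<le> t \<Longrightarrow> g t = A7" "\<And>t. t \<le> - (3/4) \<Longrightarrow> g t = A8"
    "(g has_integral 3/4 * (A7 + A8)) {- (3/4)..3/4}"
    "((\<lambda>t. (g t)\<^sup>2) has_integral 3/4 * (A7\<^sup>2 + A8\<^sup>2)) {- (3/4)..3/4}"
    using profile_with_moments_exists[of "3/4" A7 A8] by auto
  obtain \<gamma>3 where \<gamma>3: "C_infinity_on {-1..1} \<gamma>3"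
    "\<And>t. t \<in> {-1..1} \<Longrightarrow> vector_derivative \<gamma>3 (at t within {-1..1}) = g t"
    "\<And>t. t \<in> {-1..1} \<Longrightarrow> 3/4 \<le> t \<Longrightarrow> \<gamma>3 t = A7 * t"
    "\<And>t. t \<in> {-1..1} \<Longrightarrow> t \<le> - (3/4) \<Longrightarrow> \<gamma>3 t = A8 * t"
    using antiderivative_linear_outside[OF g(1-4)] by auto
  have sq_smooth: "smooth (\<lambda>t. - (1/2) * (g t)\<^sup>2)"
    unfolding power2_eq_square by (intro smooth_cmult smooth_mult g(1))
  have "- (1/2) * (3/4 * (A7\<^sup>2 + A8\<^sup>2)) = 3/4 * (- (1/2) * A7\<^sup>2 + - (1/2) * A8\<^sup>2)"
    by (simp add: algebra_simps)
  then have sq_integral: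
    "((\<lambda>t. - (1/2) * (g t)\<^sup>2) has_integral 3/4 * (- (1/2) * A7\<^sup>2 + - (1/2) * A8\<^sup>2)) {- (3/4)..3/4}"
    using has_integral_mult_right[OF g(5), of "- (1/2)"] by (simp only:)
  obtain \<gamma>2 where \<gamma>2: "C_infinity_on {-1..1} \<gamma>2"
    "\<And>t. t \<in> {-1..1} \<Longrightarrow> vector_derivative \<gamma>2 (at t within {-1..1}) = - (1/2) * (g t)\<^sup>2"
    "\<And>t. t \<in> {-1..1} \<Longrightarrow> 3/4 \<le> t \<Longrightarrow> \<gamma>2 t = - (1/2) * A7\<^sup>2 * t"
    "\<And>t. t \<in> {-1..1} \<Longrightarrow> t \<le> - (3/4) \<Longrightarrow> \<gamma>2 t = - (1/2) * A8\<^sup>2 * t"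
    using antiderivative_linear_outside[OF sq_smooth _ _ sq_integral] g(2,3) by auto
  show ?thesis
    using \<gamma>2 \<gamma>3 by (intro exI[of _ \<gamma>2] exI[of _ \<gamma>3]) simp
qed
end
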